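(* Let $M\ge 2$ and $0<p_1<p_2<\cdots<p_M$. For $i=1,\dots,M$ define the linear functions $\eta_i(c)=p_i c+\log p_i$ of $c\in\mathbb R$, and for $i\ne j$ let $c_{i,j}=-(\log p_i-\log p_j)/(p_i-p_j)$, so that $\eta_i(c_{i,j})=\eta_j(c_{i,j})$. For $i<j$ define the level of intersection $$\sigma_{i,j}=\big|\{\,l\in\{1,\dots,M\}:\ \eta_l(c_{i,j})<\eta_i(c_{i,j})=\eta_j(c_{i,j})\,\}\big|,$$ and for $s\ge 0$ let $I(s)=\{(i,j):\ 1\le i<j\le M,\ \sigma_{i,j}=s\}$. Then for every $0\le s\le M-2$, $$I(s)=\{(i,\,M-s+i-1):\ i=1,\dots,s+1\}.$$ *)

theory Defs
  imports Complex_Main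
begin

definition eta :: "(nat \<Rightarrow> real) \<Rightarrow> nat \<Rightarrow> real \<Rightarrow> real" where
  "eta p i c = p i * c + ln (p i)"

definition cint :: "(nat \<Rightarrow> real) \<Rightarrow> nat \<Rightarrow> nat \<Rightarrow> real" where
  "cint p i j = - (ln (p i) - ln (p j)) / (p i - p j)"

definition sigma :: "(nat \<Rightarrow> real) \<Rightarrow> nat \<Rightarrow> nat \<Rightarrow> nat \<Rightarrow> nat" where
  "sigma p M i j = card {l \<in> {1..M}. eta p l (cint p i j) < eta p i (cint p i j)
                                     \<and> eta p i (cint p i j) = eta p j (cint p i j)}"

definition Ilev :: "(nat \<Rightarrow> real) \<Rightarrow> nat \<Rightarrow> nat \<Rightarrow> (nat \<times> nat) set" where
  "Ilev p M s = {(i, j). 1 \<le> i \<and> i < j \<and> j \<le> M \<and> sigma p M i j = s}"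

end

theory Submission
  imports Defs
begin

text \<open>At the crossing point \<open>c = c\<^sub>i\<^sub>,\<^sub>j\<close> the difference \<open>\<eta>\<^sub>l(c) - \<eta>\<^sub>i(c) = ln p\<^sub>l + c p\<^sub>l - \<eta>\<^sub>i(c)\<close>
  is a strictly concave function of \<open>p\<^sub>l\<close> vanishing at \<open>p\<^sub>i\<close> and \<open>p\<^sub>j\<close>, so it is negative exactly
  when \<open>p\<^sub>l\<close> lies outside \<open>[p\<^sub>i, p\<^sub>j]\<close>. As the \<open>p\<^sub>l\<close> are increasing, the lines below the crossing
  are those with \<open>l < i\<close> or \<open>l > j\<close>, hence \<open>\<sigma>\<^sub>i\<^sub>,\<^sub>j = (i - 1) + (M - j)\<close>, and \<open>\<sigma>\<^sub>i\<^sub>,\<^sub>j = s\<close> forces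
  \<open>j = M - s + i - 1\<close>.\<close>

lemma strict_mono_on_atLeastAtMost_Suc:
  fixes f :: "nat \<Rightarrow> 'a::order"
  assumes "\<And>n. a \<le> n \<Longrightarrow> n < b \<Longrightarrow> f n < f (Suc n)"
  shows "strict_mono_on {a..b} f"
proof (rule strict_mono_onI)
  fix r s assume "r \<in> {a..b}" "s \<in> {a..b}" "r < s"
  then have "Suc r \<le> s" "s \<le> b" "a \<le> r" by auto
  then show "f r < f s"
  proof (induction s rule: dec_induct)
    case base
    then show ?case using assms by simp
  next
    case (step n)
    then show ?case using assms[of n] by simp
  qed
qed

lemma ln_less_minus_one: "0 < x \<Longrightarrow> x \<noteq> 1 \<Longrightarrow> ln x < x - 1"
  for x :: real
  using ln_le_minus_one[of x] ln_eq_minus_one[of x] by force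

lemma ln_above_chord:
  fixes a b d :: real
  assumes "0 < a" "a < b" "b < d"
  shows "(d - b) * ln a + (b - a) * ln d < (d - a) * ln b"
proof -
  have "ln a - ln b < (a - b) / b"
    using ln_less_minus_one[of "a / b"] assms by (simp add: ln_div diff_divide_distrib)
  then have left: "(d - b) * (ln a - ln b) < (d - b) * ((a - b) / b)"
    using assms by (intro mult_strict_left_mono) auto
  have "ln d - ln b < (d - b) / b"
    using ln_less_minus_one[of "d / b"] assms by (simp add: ln_div diff_divide_distrib)
  then have right: "(b - a) * (ln d - ln b) < (b - a) * ((d - b) / b)"
    using assms by (intro mult_strict_left_mono) auto
  have "(d - b) * ((a - b) / b) + (b - a) * ((d - b) / b) = 0"
    using assms by (simp add: field_simps)
  with left right show ?thesis
    by (simp add: algebra_simps)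
qed

lemma ln_plus_affine_neg_iff:
  fixes a b c k x :: real
  assumes "0 < a" "a < b" "0 < x"
    and "ln a + c * a + k = 0" "ln b + c * b + k = 0"
  shows "ln x + c * x + k < 0 \<longleftrightarrow> x < a \<or> b < x"
proof -
  define g where "g y = ln y + c * y + k" for y
  have chord: "(v - u) * g t + (u - t) * g v < (v - t) * g u"
    if "0 < t" "t < u" "u < v" for t u v
  proof -
    have "(v - t) * (c * u + k) = (v - u) * (c * t + k) + (u - t) * (c * v + k)"
      by (simp add: algebra_simps)
    with ln_above_chord[OF that] show ?thesis
      by (simp add: g_def algebra_simps)
  qed
  have "g a = 0" "g b = 0"
    using assms(4,5) by (simp_all add: g_def)
  consider "x < a" | "x = a" | "a < x" "x < b" | "x = b" | "b < x"
    by linarith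
  then have "g x < 0 \<longleftrightarrow> x < a \<or> b < x"
  proof cases
    case 1
    with chord[of x a b] \<open>g a = 0\<close> \<open>g b = 0\<close> assms show ?thesis
      by (simp add: mult_less_0_iff)
  next
    case 3
    with chord[of a x b] \<open>g a = 0\<close> \<open>g b = 0\<close> assms show ?thesis
      by (simp add: zero_less_mult_iff)
  next
    case 5
    with chord[of a b x] \<open>g a = 0\<close> \<open>g b = 0\<close> assms show ?thesis
      by (simp add: mult_less_0_iff)
  qed (use \<open>g a = 0\<close> \<open>g b = 0\<close> assms in auto)
  then show ?thesis
    by (simp add: g_def)
qed

lemma eta_cint_eq: "p i \<noteq> p j \<Longrightarrow> eta p i (cint p i j) = eta p j (cint p i j)"
  unfolding eta_def cint_def by (simp add: field_simps)

lemma eta_below_crossing_iff: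
  assumes "0 < p i" "p i < p j" "0 < p l"
  shows "eta p l (cint p i j) < eta p i (cint p i j) \<longleftrightarrow> p l < p i \<or> p j < p l"
proof -
  let ?c = "cint p i j"
  have "ln (p j) + ?c * p j - eta p i ?c = 0"
    using eta_cint_eq[of p i j] assms by (simp add: eta_def algebra_simps)
  then have "ln (p l) + ?c * p l - eta p i ?c < 0 \<longleftrightarrow> p l < p i \<or> p j < p l"
    using ln_plus_affine_neg_iff[of "p i" "p j" "p l" ?c "- eta p i ?c"] assms
    by (simp add: eta_def algebra_simps)
  then show ?thesis
    by (simp add: eta_def algebra_simps)
qed

lemma sigma_eq:
  assumes mono: "strict_mono_on {1..M} p" and "0 < p 1"
    and "1 \<le> i" "i < j" "j \<le> M"
  shows "sigma p M i j = (i - 1) + (M - j)"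
proof -
  have pos: "0 < p l" if "l \<in> {1..M}" for l
    using strict_mono_on_leD[OF mono, of 1 l] that assms by fastforce
  have "sigma p M i j = card {l \<in> {1..M}. p l < p i \<or> p j < p l}"
    unfolding sigma_def using eta_below_crossing_iff[of p i j] eta_cint_eq[of p i j] pos
      strict_mono_onD[OF mono, of i j] assms by (intro arg_cong[where f = card]) force
  also have "\<dots> = card ({1..<i} \<union> {j<..M})"
    using strict_mono_on_less[OF mono] assms by (intro arg_cong[where f = card]) auto
  also have "\<dots> = (i - 1) + (M - j)"
    using assms by (subst card_Un_disjoint) auto
  finally show ?thesis .
qed

theorem lemma2:
  fixes p :: "nat \<Rightarrow> real" and M s :: nat
  assumes "M \<ge> 2"
    and "0 < p 1"
    and "\<And>i. 1 \<le> i \<Longrightarrow> i < M \<Longrightarrow> p i < p (Suc i)"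
    and "s \<le> M - 2"
  shows "Ilev p M s = {(i, M - s + i - 1) | i. 1 \<le> i \<and> i \<le> s + 1}"
proof -
  have "strict_mono_on {1..M} p"
    using assms(3) by (rule strict_mono_on_atLeastAtMost_Suc)
  then have "Ilev p M s = {(i, j). 1 \<le> i \<and> i < j \<and> j \<le> M \<and> (i - 1) + (M - j) = s}"
    unfolding Ilev_def using sigma_eq assms(2) by auto
  also have "\<dots> = {(i, M - s + i - 1) | i. 1 \<le> i \<and> i \<le> s + 1}"
    using assms(1,4) by auto
  finally show ?thesis .
qed

end
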